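(* Let $k>0$ and consider the system of ODEs, for $r>0$, $\theta$, $z$, $p_R$, $p_S$ real, \[ \dot r = p_R,\quad \dot\theta = \frac{p_S}{r^2},\quad \dot z = \frac{p_S}{2},\quad \dot p_R = \frac{p_S^2}{r^3} - \frac{2kr^3}{(r^4+16z^2)^{3/2}},\quad \dot p_S = -\frac{8kr^2 z}{(r^4+16z^2)^{3/2}}. \] This system does not admit any (non-constant) first integral that is linear in the momenta, i.e. of the form $F = f(r,\theta,z)\,p_R + g(r,\theta,z)\,p_S + h(r,\theta,z)$ with smooth coefficients.
   Context: A first integral is a function of $(r,\theta,z,p_R,p_S)$ constant along all solutions. The system describes nonholonomic motion on the Heisenberg group in the potential $-k/\sqrt{r^4+16z^2}$ in cylindrical coordinates. *)

theory Defs
  imports "HOL-Analysis.Analysis"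
begin

text \<open>C-infinity functions on an open set S of a Euclidean space: f belongs to a
  family of functions, each of which is (Frechet) differentiable on S and whose
  partial derivatives in every basis direction again lie in the family.\<close>
definition smooth_on :: "('a::euclidean_space) set \<Rightarrow> ('a \<Rightarrow> real) \<Rightarrow> bool" where
  "smooth_on S f \<longleftrightarrow>
     (\<exists>Fam. f \<in> Fam \<and>
        (\<forall>g\<in>Fam. \<exists>G. (\<forall>x\<in>S. (g has_derivative G x) (at x)) \<and>
                       (\<forall>b\<in>Basis. (\<lambda>x. G x b) \<in> Fam)))"

type_synonym state = "real \<times> real \<times> real \<times> real \<times> real"
  \<comment> \<open>(r, theta, z, p_R, p_S)\<close>

definition phase_space :: "state set" where
  "phase_space = {(r, \<theta>, z, pR, pS). r > 0}"

definition heis_field :: "real \<Rightarrow> state \<Rightarrow> state" where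
  "heis_field k = (\<lambda>(r, \<theta>, z, pR, pS).
     (pR,
      pS / r\<^sup>2,
      pS / 2,
      pS\<^sup>2 / r ^ 3 - 2 * k * r ^ 3 / (r ^ 4 + 16 * z\<^sup>2) powr (3/2),
      - 8 * k * r\<^sup>2 * z / (r ^ 4 + 16 * z\<^sup>2) powr (3/2)))"

definition is_solution :: "real \<Rightarrow> (real \<Rightarrow> state) \<Rightarrow> real set \<Rightarrow> bool" where
  "is_solution k x I \<longleftrightarrow>
     (\<forall>t\<in>I. x t \<in> phase_space \<and> (x has_vector_derivative heis_field k (x t)) (at t))"

definition first_integral :: "real \<Rightarrow> (state \<Rightarrow> real) \<Rightarrow> bool" where
  "first_integral k F \<longleftrightarrow>
     (\<forall>x a b. a < b \<longrightarrow> is_solution k x {a<..<b} \<longrightarrow>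
        (\<forall>s\<in>{a<..<b}. \<forall>t\<in>{a<..<b}. F (x s) = F (x t)))"

definition config_space :: "(real \<times> real \<times> real) set" where
  "config_space = {(r, \<theta>, z). r > 0}"

definition linear_in_momenta ::
  "(real \<times> real \<times> real \<Rightarrow> real) \<Rightarrow> (real \<times> real \<times> real \<Rightarrow> real) \<Rightarrow>
   (real \<times> real \<times> real \<Rightarrow> real) \<Rightarrow> state \<Rightarrow> real" where
  "linear_in_momenta f g h = (\<lambda>(r, \<theta>, z, pR, pS).
     f (r, \<theta>, z) * pR + g (r, \<theta>, z) * pS + h (r, \<theta>, z))"

end

(* Every point of phase space lies on a solution (Picard-Lindeloef), so a first integral F has
   zero derivative along the vector field everywhere.  For F = f pR + g pS + h this derivative
   is a quadratic polynomial in (pR, pS), and its coefficients give first-order PDEs: f and h do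
   not depend on r, r f + 4 z g = 0, h_theta / r^2 + h_z / 2 = 0 and
   f_theta / r^2 + f_z / 2 + g_r = 0.  Eliminating g and comparing two radii yields f_theta = 0
   and 2 z f_z = f, whose solutions c sqrt |z| are differentiable at z = 0 only for c = 0.
   Hence f = 0, then g = 0 (by continuity across z = 0), and h has zero gradient. *)

theory Submission
  imports Defs
begin

section \<open>Local existence of solutions\<close>

locale picard_iteration =
  fixes V :: "'a::euclidean_space \<Rightarrow> 'a" and p :: 'a and u L M e :: real
  assumes lipschitz: "L-lipschitz_on (cball p u) V"
    and bounded: "\<And>y. y \<in> cball p u \<Longrightarrow> norm (V y) \<le> M"
    and radius_nonneg: "0 \<le> u"
    and time_pos: "0 < e"
    and time_bound: "3 * e * M \<le> u"
    and time_contraction: "8 * e * L \<le> 1"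
begin

definition clamp :: "real \<Rightarrow> real" where
  "clamp t = max (-e) (min e t)"

text \<open>Integrals start at \<open>-e\<close> because \<open>integral {a..b}\<close> vanishes for \<open>b < a\<close>; clamping the
  upper limit extends the operator to all of \<open>\<real>\<close>, so that it acts on bounded continuous functions.\<close>
definition picard_op :: "(real \<Rightarrow> 'a) \<Rightarrow> real \<Rightarrow> 'a" where
  "picard_op y t = p + integral {-e..clamp t} (\<lambda>s. V (y s)) - integral {-e..0} (\<lambda>s. V (y s))"

definition tube :: "(real \<Rightarrow>\<^sub>C 'a) set" where
  "tube = PiC UNIV (\<lambda>_. cball p u)"

lemma mem_tube_iff: "y \<in> tube \<longleftrightarrow> (\<forall>t. y t \<in> cball p u)"
  by (auto simp: tube_def mem_PiC_iff)

lemma clamp_mem: "clamp t \<in> {-e..e}"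
  using time_pos by (auto simp: clamp_def)

lemma clamp_id: "t \<in> {-e..e} \<Longrightarrow> clamp t = t"
  by (auto simp: clamp_def)

lemma L_nonneg: "0 \<le> L"
  using lipschitz by (rule lipschitz_on_nonneg)

lemma M_nonneg: "0 \<le> M"
proof -
  have "norm (V p) \<le> M"
    using radius_nonneg by (intro bounded) simp
  then show ?thesis
    using norm_ge_zero order_trans by blast
qed

lemma continuous_on_field_tube: "y \<in> tube \<Longrightarrow> continuous_on A (\<lambda>s. V (y s))"
  by (rule continuous_on_compose2[OF lipschitz_on_continuous_on[OF lipschitz]])
    (auto simp: mem_tube_iff intro: continuous_on_subset[OF continuous_on_apply_bcontfun])

lemma norm_integral_field_le:
  assumes "y \<in> tube" "c \<in> {-e..e}"
  shows "norm (integral {-e..c} (\<lambda>s. V (y s))) \<le> M * (c + e)"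
proof -
  have "norm (integral {-e..c} (\<lambda>s. V (y s))) \<le> M * (c - (-e))"
    using assms by (intro integral_bound continuous_on_field_tube bounded) (auto simp: mem_tube_iff)
  then show ?thesis by simp
qed

lemma norm_integral_field_diff_le:
  assumes y: "y \<in> tube" and z: "z \<in> tube" and c: "c \<in> {-e..e}"
  shows "norm (integral {-e..c} (\<lambda>s. V (y s)) - integral {-e..c} (\<lambda>s. V (z s)))
    \<le> L * dist y z * (c + e)"
proof -
  have "integral {-e..c} (\<lambda>s. V (y s)) - integral {-e..c} (\<lambda>s. V (z s))
      = integral {-e..c} (\<lambda>s. V (y s) - V (z s))"
    using y z by (intro integral_diff[symmetric] integrable_continuous_real continuous_on_field_tube)
  also have "norm \<dots> \<le> L * dist y z * (c - (-e))"
  proof (rule integral_bound)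
    fix s
    have "dist (V (y s)) (V (z s)) \<le> L * dist (y s) (z s)"
      using y z by (intro lipschitz_onD[OF lipschitz]) (auto simp: mem_tube_iff)
    also have "\<dots> \<le> L * dist y z"
      by (intro mult_left_mono dist_bounded L_nonneg)
    finally show "norm (V (y s) - V (z s)) \<le> L * dist y z"
      by (simp add: dist_norm)
  qed (use c y z in \<open>auto intro: continuous_intros continuous_on_field_tube\<close>)
  finally show ?thesis by simp
qed

lemma picard_op_mem_cball:
  assumes "y \<in> tube"
  shows "picard_op y t \<in> cball p u"
proof -
  have "M * (clamp t + e) \<le> M * (2 * e)"
    using clamp_mem[of t] M_nonneg by (intro mult_left_mono) auto
  then have "norm (integral {-e..clamp t} (\<lambda>s. V (y s))) \<le> M * (2 * e)"
    using norm_integral_field_le[OF assms clamp_mem, of t] by linarith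
  moreover have "norm (integral {-e..0} (\<lambda>s. V (y s))) \<le> M * e"
    using norm_integral_field_le[OF assms, of 0] time_pos by simp
  ultimately have "norm (integral {-e..clamp t} (\<lambda>s. V (y s)) - integral {-e..0} (\<lambda>s. V (y s)))
      \<le> 3 * e * M"
    using norm_triangle_ineq4[of "integral {-e..clamp t} (\<lambda>s. V (y s))" "integral {-e..0} (\<lambda>s. V (y s))"]
    by (simp add: algebra_simps)
  then show ?thesis
    using time_bound by (simp add: picard_op_def dist_norm norm_minus_commute)
qed

lemma picard_op_bcontfun:
  assumes "y \<in> tube"
  shows "picard_op y \<in> bcontfun"
proof (rule bcontfun_normI)
  have "continuous_on {-e..e} (\<lambda>c. integral {-e..c} (\<lambda>s. V (y s)))"
    using assms time_pos by (intro indefinite_integral_continuous_1 integrable_continuous_real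
        continuous_on_field_tube)
  then have "continuous_on UNIV (\<lambda>t. integral {-e..clamp t} (\<lambda>s. V (y s)))"
    by (rule continuous_on_compose2) (use clamp_mem in \<open>auto simp: clamp_def intro!: continuous_intros\<close>)
  then show "continuous_on UNIV (picard_op y)"
    unfolding picard_op_def by (intro continuous_intros)
  show "norm (picard_op y t) \<le> norm p + u" for t
    using picard_op_mem_cball[OF assms, of t] norm_triangle_ineq2[of "picard_op y t" p]
    by (simp add: dist_norm norm_minus_commute)
qed

lemma dist_picard_op_le:
  assumes y: "y \<in> tube" and z: "z \<in> tube"
  shows "dist (picard_op y t) (picard_op z t) \<le> dist y z / 2"
proof -
  define D where "D = L * dist y z"
  have D: "0 \<le> D" "4 * e * D \<le> dist y z / 2"
    using L_nonneg mult_right_mono[OF time_contraction zero_le_dist[of y z]]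
    by (simp_all add: D_def mult.assoc)
  let ?A = "integral {-e..clamp t} (\<lambda>s. V (y s)) - integral {-e..clamp t} (\<lambda>s. V (z s))"
  let ?B = "integral {-e..0} (\<lambda>s. V (y s)) - integral {-e..0} (\<lambda>s. V (z s))"
  have "norm ?A \<le> D * (clamp t + e)"
    using norm_integral_field_diff_le[OF y z clamp_mem] by (simp add: D_def)
  also have "\<dots> \<le> D * (2 * e)"
    using clamp_mem[of t] D(1) by (intro mult_left_mono) auto
  finally have A: "norm ?A \<le> D * (2 * e)" .
  have "norm ?B \<le> D * e"
    using norm_integral_field_diff_le[OF y z, of 0] time_pos by (simp add: D_def)
  also have "\<dots> \<le> D * (2 * e)"
    using time_pos D(1) by (intro mult_left_mono) auto
  finally have B: "norm ?B \<le> D * (2 * e)" .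
  have "dist (picard_op y t) (picard_op z t) = norm (?A - ?B)"
    by (simp add: picard_op_def dist_norm algebra_simps)
  also have "\<dots> \<le> D * (2 * e) + D * (2 * e)"
    using A B norm_triangle_ineq4[of ?A ?B] by linarith
  finally have "dist (picard_op y t) (picard_op z t) \<le> 4 * e * D"
    by (simp add: algebra_simps)
  with D show ?thesis by linarith
qed

lemma picard_op_fixed_point:
  obtains y where "y \<in> tube" "picard_op y = apply_bcontfun y"
proof -
  define P :: "(real \<Rightarrow>\<^sub>C 'a) \<Rightarrow> real \<Rightarrow>\<^sub>C 'a" where "P y = Bcontfun (picard_op y)" for y
  have P_apply: "apply_bcontfun (P y) = picard_op y" if "y \<in> tube" for y
    using picard_op_bcontfun[OF that] by (simp add: P_def Bcontfun_inverse)
  have "complete tube"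
    unfolding tube_def by (simp add: complete_eq_closed closed_PiC)
  moreover have "Bcontfun (\<lambda>_. p) \<in> tube"
    using radius_nonneg by (simp add: mem_tube_iff Bcontfun_inverse[OF const_bcontfun])
  then have "tube \<noteq> {}"
    by blast
  moreover have "P ` tube \<subseteq> tube"
    using P_apply picard_op_mem_cball by (auto simp: mem_tube_iff)
  moreover have "dist (P y) (P z) \<le> 1/2 * dist y z" if "y \<in> tube" "z \<in> tube" for y z
    using dist_picard_op_le[OF that] by (intro dist_bound) (simp add: P_apply that)
  ultimately obtain y where "y \<in> tube" "P y = y"
    using Banach_fix[of tube "1/2" P] by auto
  with P_apply that show ?thesis
    by metis
qed

lemma local_solution:
  "\<exists>x. x 0 = p \<and> (\<forall>t\<in>{-e<..<e}. x t \<in> cball p u \<and> (x has_vector_derivative V (x t)) (at t))"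
proof -
  obtain y where y: "y \<in> tube" and fixed: "picard_op y = apply_bcontfun y"
    by (rule picard_op_fixed_point)
  have y_eq: "y t = p + integral {-e..t} (\<lambda>s. V (y s)) - integral {-e..0} (\<lambda>s. V (y s))"
    if "t \<in> {-e..e}" for t
    using fun_cong[OF fixed, of t] by (simp add: picard_op_def clamp_id[OF that])
  have "(y has_vector_derivative V (y t)) (at t)" if t: "t \<in> {-e<..<e}" for t
  proof -
    have "((\<lambda>c. p + integral {-e..c} (\<lambda>s. V (y s)) - integral {-e..0} (\<lambda>s. V (y s)))
        has_vector_derivative V (y t)) (at t within {-e..e})"
      using t y by (auto intro!: derivative_eq_intros integral_has_vector_derivative
          continuous_on_field_tube)
    then have "(y has_vector_derivative V (y t)) (at t within {-e..e})"
      by (rule has_vector_derivative_transform[rotated 2]) (use t y_eq in auto)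
    then show ?thesis
      using t by (simp add: at_within_Icc_at)
  qed
  moreover have "y 0 = p"
    using y_eq[of 0] time_pos by simp
  ultimately show ?thesis
    using y by (auto simp: mem_tube_iff)
qed

end

lemma lipschitz_on_cball_local_solution:
  fixes V :: "'a::euclidean_space \<Rightarrow> 'a"
  assumes "0 < u" and lipschitz: "L-lipschitz_on (cball p u) V"
  shows "\<exists>e>0. \<exists>x. x 0 = p \<and>
    (\<forall>t\<in>{-e<..<e}. x t \<in> cball p u \<and> (x has_vector_derivative V (x t)) (at t))"
proof -
  have "compact (V ` cball p u)"
    by (intro compact_continuous_image lipschitz_on_continuous_on[OF lipschitz] compact_cball)
  then obtain M where M: "0 < M" "\<And>y. y \<in> cball p u \<Longrightarrow> norm (V y) \<le> M"
    by (auto dest!: compact_imp_bounded simp: bounded_pos)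
  define e where "e = min (u / (3 * M)) (1 / (8 * (L + 1)))"
  have L: "0 \<le> L"
    using lipschitz by (rule lipschitz_on_nonneg)
  have "0 < e"
    using \<open>0 < u\<close> M L by (simp add: e_def)
  moreover have "3 * e * M \<le> u"
  proof -
    have "e \<le> u / (3 * M)"
      by (simp add: e_def)
    then show ?thesis
      using M by (simp add: field_simps)
  qed
  moreover have "8 * e * L \<le> 1"
  proof -
    have "e \<le> 1 / (8 * (L + 1))"
      by (simp add: e_def)
    then have "8 * e * (L + 1) \<le> 1"
      using L by (simp add: field_simps)
    then show ?thesis
      using \<open>0 < e\<close> by (simp add: algebra_simps)
  qed
  ultimately interpret picard_iteration V p u L M e
    using assms M by unfold_locales auto
  show ?thesis
    using local_solution \<open>0 < e\<close> by blast
qed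

lemma local_lipschitz_local_solution:
  fixes V :: "'a::euclidean_space \<Rightarrow> 'a"
  assumes "open S" "local_lipschitz (UNIV :: real set) S (\<lambda>_. V)" "p \<in> S"
  shows "\<exists>e>0. \<exists>x. x 0 = p \<and>
    (\<forall>t\<in>{-e<..<e}. x t \<in> S \<and> (x has_vector_derivative V (x t)) (at t))"
proof -
  obtain u L where "0 < u"
    and L0: "\<And>s::real. s \<in> cball 0 u \<inter> UNIV \<Longrightarrow> L-lipschitz_on (cball p u \<inter> S) V"
    by (rule local_lipschitzE[OF assms(2) UNIV_I[of "0::real"] assms(3)]) iprover
  have L: "L-lipschitz_on (cball p u \<inter> S) V"
    using L0[of 0] \<open>0 < u\<close> by simp
  obtain u' where "0 < u'" "cball p u' \<subseteq> S"
    using assms(1,3) open_contains_cball by blast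
  define v where "v = min u u'"
  have "0 < v" and v: "cball p v \<subseteq> cball p u \<inter> S"
    using \<open>0 < u\<close> \<open>0 < u'\<close> \<open>cball p u' \<subseteq> S\<close> by (auto simp: v_def)
  then have "L-lipschitz_on (cball p v) V"
    using lipschitz_on_subset[OF L] by blast
  then obtain e x where "0 < e" "x 0 = p"
    and x: "\<forall>t\<in>{-e<..<e}. x t \<in> cball p v \<and> (x has_vector_derivative V (x t)) (at t)"
    using lipschitz_on_cball_local_solution[OF \<open>0 < v\<close>] by blast
  moreover have "\<forall>t\<in>{-e<..<e}. x t \<in> S"
    using x v by blast
  ultimately show ?thesis
    using x by blast
qed

lemma has_derivative_zero_along_level_curve:
  fixes F :: "'a::real_normed_vector \<Rightarrow> real"
  assumes "(F has_derivative DF) (at (x 0))" "(x has_vector_derivative v) (at 0)"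
    and "0 < e" "\<And>t. t \<in> {-e<..<e} \<Longrightarrow> F (x t) = c"
  shows "DF v = 0"
proof -
  have "((\<lambda>t. F (x t)) has_derivative (\<lambda>t. DF (t *\<^sub>R v))) (at 0)"
    using has_derivative_compose[OF assms(2)[unfolded has_vector_derivative_def] assms(1)] .
  then have "((\<lambda>t. c) has_derivative (\<lambda>t. DF (t *\<^sub>R v))) (at 0)"
    by (rule has_derivative_transform_within_open[where s = "{-e<..<e}"]) (use assms(3,4) in auto)
  moreover have "((\<lambda>t. c) has_derivative (\<lambda>t. 0)) (at 0)"
    by (rule has_derivative_const)
  ultimately have "(\<lambda>t. DF (t *\<^sub>R v)) = (\<lambda>t. 0)"
    by (rule has_derivative_unique)
  from fun_cong[OF this, of 1] show ?thesis
    by simp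
qed

lemma linear_real3_expand:
  assumes "linear (L :: real \<times> real \<times> real \<Rightarrow> real)"
  shows "L (a, b, c) = a * L (1, 0, 0) + b * L (0, 1, 0) + c * L (0, 0, 1)"
proof -
  have "L (a, b, c) = L (a *\<^sub>R (1, 0, 0) + b *\<^sub>R (0, 1, 0) + c *\<^sub>R (0, 0, 1))"
    by simp
  also have "\<dots> = a * L (1, 0, 0) + b * L (0, 1, 0) + c * L (0, 0, 1)"
    by (simp only: linear_add[OF assms] linear_cmul[OF assms] real_scaleR_def)
  finally show ?thesis .
qed

lemma quadratic_form_vanishing_coeffs:
  fixes a b c d e f :: real
  assumes "\<And>x y. a * x\<^sup>2 + b * x * y + c * y\<^sup>2 + d * x + e * y + f = 0"
  shows "a = 0" "b = 0" "c = 0" "d = 0" "e = 0" "f = 0"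
proof -
  have "f = 0" "a + d + f = 0" "a - d + f = 0" "c + e + f = 0" "c - e + f = 0"
    "a + b + c + d + e + f = 0"
    using assms[of 0 0] assms[of 1 0] assms[of "-1" 0] assms[of 0 1] assms[of 0 "-1"] assms[of 1 1]
    by simp_all
  then show "a = 0" "b = 0" "c = 0" "d = 0" "e = 0" "f = 0"
    by linarith+
qed

lemma has_real_derivative_along_line:
  fixes \<phi> :: "'a::real_normed_vector \<Rightarrow> real"
  assumes "(\<phi> has_derivative D) (at (q + s *\<^sub>R w))"
  shows "((\<lambda>s. \<phi> (q + s *\<^sub>R w)) has_real_derivative D w) (at s)"
proof -
  have "((\<lambda>s. q + s *\<^sub>R w) has_derivative (\<lambda>t. t *\<^sub>R w)) (at s)"
    by (auto intro!: derivative_eq_intros)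
  from has_derivative_compose[OF this assms] have
    "((\<lambda>s. \<phi> (q + s *\<^sub>R w)) has_derivative (\<lambda>t. D (t *\<^sub>R w))) (at s)" .
  moreover have "(\<lambda>t. D (t *\<^sub>R w)) = (*) (D w)"
    using linear_cmul[OF has_derivative_linear[OF assms]] by (auto simp: fun_eq_iff)
  ultimately show ?thesis
    by (simp add: has_field_derivative_def)
qed

lemma differentiable_solution_2z_deriv_eq_self:
  fixes u u' :: "real \<Rightarrow> real"
  assumes deriv: "\<And>z. (u has_real_derivative u' z) (at z)"
    and ode: "\<And>z. z \<noteq> 0 \<Longrightarrow> 2 * z * u' z = u z"
    and "u 0 = 0"
  shows "u z = 0"
proof -
  \<comment> \<open>\<open>\<psi>\<close> is constant on each half-line by the ODE, and tends to \<open>0\<close> at \<open>0\<close> because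
    \<open>\<psi> y = y * ((u y - u 0) / y)\<^sup>2\<close> with a convergent difference quotient.\<close>
  define \<psi> where "\<psi> y = u y * u y / y" for y
  have \<psi>_deriv: "(\<psi> has_real_derivative 0) (at y)" if "y \<noteq> 0" for y
  proof -
    have "(\<psi> has_real_derivative ((u' y * u y + u y * u' y) * y - u y * u y * 1) / (y * y)) (at y)"
      unfolding \<psi>_def by (rule derivative_eq_intros deriv refl | simp add: that)+
    also have "((u' y * u y + u y * u' y) * y - u y * u y * 1) / (y * y) = u y * (2 * y * u' y - u y) / (y * y)"
      by (simp add: algebra_simps)
    finally show ?thesis
      using ode[OF that] by simp
  qed
  have "((\<lambda>y. y * ((u y - u 0) / (y - 0)) * ((u y - u 0) / (y - 0))) \<longlongrightarrow> 0 * u' 0 * u' 0) (at 0)"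
    using deriv[of 0] unfolding has_field_derivative_iff by (intro tendsto_mult tendsto_ident_at)
  then have "((\<lambda>y. y * ((u y - u 0) / (y - 0)) * ((u y - u 0) / (y - 0))) \<longlongrightarrow> 0) (at 0)"
    by simp
  moreover have "\<forall>\<^sub>F y in at 0. y * ((u y - u 0) / (y - 0)) * ((u y - u 0) / (y - 0)) = \<psi> y"
    unfolding eventually_at_filter
    by (rule always_eventually) (simp add: \<psi>_def \<open>u 0 = 0\<close>)
  ultimately have \<psi>_lim: "(\<psi> \<longlongrightarrow> 0) (at 0)"
    by (rule Lim_transform_eventually)
  have side: "u z = 0" if "z \<in> S" "convex S" "0 \<notin> S" "at 0 within S \<noteq> bot" for S
  proof -
    have "(\<psi> has_real_derivative 0) (at y within S)" if "y \<in> S" for y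
      using \<psi>_deriv \<open>0 \<notin> S\<close> that by (metis has_field_derivative_at_within)
    then obtain c where c: "\<And>y. y \<in> S \<Longrightarrow> \<psi> y = c"
      using has_field_derivative_zero_constant[OF \<open>convex S\<close>] by blast
    have "\<forall>\<^sub>F y in at 0 within S. \<psi> y = c"
      unfolding eventually_at_filter by (rule always_eventually) (simp add: c)
    then have "(\<psi> \<longlongrightarrow> c) (at 0 within S)"
      by (rule tendsto_eventually)
    moreover have "(\<psi> \<longlongrightarrow> 0) (at 0 within S)"
      using \<psi>_lim by (rule tendsto_within_subset) simp
    ultimately have "c = 0"
      using tendsto_unique[OF \<open>at 0 within S \<noteq> bot\<close>] by blast
    then show ?thesis
      using c[OF \<open>z \<in> S\<close>] \<open>0 \<notin> S\<close> \<open>z \<in> S\<close> by (auto simp: \<psi>_def)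
  qed
  consider "0 < z" | "z < 0" | "z = 0"
    by linarith
  then show ?thesis
  proof cases
    case 1
    then show ?thesis
      by (intro side[of "{0<..}"]) (auto simp: convex_real_interval)
  next
    case 2
    then show ?thesis
      by (intro side[of "{..<0}"]) (auto simp: convex_real_interval)
  qed (use \<open>u 0 = 0\<close> in simp)
qed

lemma mem_phase_space_iff: "x \<in> phase_space \<longleftrightarrow> 0 < fst x"
  by (cases x) (simp add: phase_space_def)

lemma open_phase_space: "open phase_space"
proof -
  have "open {x :: state. 0 < fst x}"
    by (intro open_Collect_less continuous_intros)
  moreover have "phase_space = {x. 0 < fst x}"
    by (auto simp: mem_phase_space_iff)
  ultimately show ?thesis
    by simp
qed

text \<open>Fourth power of the Koranyi gauge; the potential is \<open>-k / sqrt (gauge4 r z)\<close>.\<close>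
definition gauge4 :: "real \<Rightarrow> real \<Rightarrow> real" where
  "gauge4 r z = r ^ 4 + 16 * z\<^sup>2"

lemma gauge4_pos: "0 < r \<Longrightarrow> 0 < gauge4 r z"
  by (simp add: gauge4_def add_pos_nonneg)

lemma gauge4_nonzero: "0 < r \<Longrightarrow> gauge4 r z powr (3/2) \<noteq> 0" "0 < r \<Longrightarrow> gauge4 r z \<noteq> 0"
  using gauge4_pos[of r z] by simp_all

lemma gauge4_has_derivative:
  assumes "(f has_derivative f') (at x within S)" "(g has_derivative g') (at x within S)"
    and "D = (\<lambda>v. 4 * f x ^ 3 * f' v + 32 * g x * g' v)"
  shows "((\<lambda>x. gauge4 (f x) (g x)) has_derivative D) (at x within S)"
  unfolding gauge4_def assms(3)
  by (rule derivative_eq_intros assms(1,2) refl)+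
    (simp add: fun_eq_iff algebra_simps power2_eq_square power3_eq_cube)

lemma heis_field_eq:
  "heis_field k x =
    (let r = fst x; z = fst (snd (snd x)); pR = fst (snd (snd (snd x)));
         pS = snd (snd (snd (snd x))); Q = gauge4 r z powr (3/2)
     in (pR, pS / r\<^sup>2, pS / 2, pS\<^sup>2 / r ^ 3 - 2 * k * r ^ 3 / Q, - 8 * k * r\<^sup>2 * z / Q))"
  by (cases x) (simp add: heis_field_def gauge4_def Let_def)

definition heis_field_deriv :: "real \<Rightarrow> state \<Rightarrow> state \<Rightarrow> state" where
  "heis_field_deriv k x v =
    (let r = fst x; z = fst (snd (snd x)); pS = snd (snd (snd (snd x)));
         dr = fst v; dz = fst (snd (snd v)); dpR = fst (snd (snd (snd v))); dpS = snd (snd (snd (snd v)));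
         W = gauge4 r z; Q = W powr (3/2); dQ = Q * (3/2) * (4 * r ^ 3 * dr + 32 * z * dz) / W
     in (dpR, dpS / r\<^sup>2 - 2 * pS * dr / r ^ 3, dpS / 2,
         2 * pS * dpS / r ^ 3 - 3 * pS\<^sup>2 * dr / r ^ 4 - 2 * k * (3 * r\<^sup>2 * dr * Q - r ^ 3 * dQ) / Q\<^sup>2,
         - 8 * k * ((2 * r * dr * z + r\<^sup>2 * dz) * Q - r\<^sup>2 * z * dQ) / Q\<^sup>2))"

lemma has_derivative_heis_field_at:
  "0 < r \<Longrightarrow> (heis_field k has_derivative heis_field_deriv k (r, \<theta>, z, pR, pS)) (at (r, \<theta>, z, pR, pS))"
  unfolding heis_field_eq[abs_def] Let_def
  apply (rule derivative_eq_intros gauge4_has_derivative refl | (simp add: gauge4_pos gauge4_nonzero; fail))+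
  apply (clarsimp simp: fun_eq_iff heis_field_deriv_def Let_def)
  apply (intro conjI)
  \<comment> \<open>the \<open>powr\<close> fact must come first, or \<open>simp\<close> discharges it with the second and loses it\<close>
  using gauge4_nonzero[of r z]
  apply (simp_all add: field_simps power2_eq_square)
  apply (simp_all add: eval_nat_numeral)
  done

lemma has_derivative_heis_field:
  "x \<in> phase_space \<Longrightarrow> (heis_field k has_derivative heis_field_deriv k x) (at x)"
  by (cases x) (simp add: phase_space_def has_derivative_heis_field_at)

lemma continuous_on_heis_field_deriv: "continuous_on phase_space (\<lambda>x. heis_field_deriv k x v)"
  unfolding heis_field_deriv_def Let_def gauge4_def
  by (intro continuous_intros)
    (auto simp: mem_phase_space_iff gauge4_nonzero[unfolded gauge4_def] add_pos_nonneg)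

lemma local_lipschitz_heis_field: "local_lipschitz (UNIV :: real set) phase_space (\<lambda>_. heis_field k)"
proof (rule c1_implies_local_lipschitz[where f' = "\<lambda>tx. Blinfun (heis_field_deriv k (snd tx))"])
  have linear: "bounded_linear (heis_field_deriv k x)" if "x \<in> phase_space" for x
    using has_derivative_heis_field[OF that] by (rule has_derivative_bounded_linear)
  show "(heis_field k has_derivative blinfun_apply (Blinfun (heis_field_deriv k (snd (t, x))))) (at x)"
    if "x \<in> phase_space" for t :: real and x
    using has_derivative_heis_field[OF that] linear[OF that] by (simp add: bounded_linear_Blinfun_apply)
  have "continuous_on (UNIV \<times> phase_space)
      (\<lambda>tx :: real \<times> state. blinfun_of_matrix (\<lambda>i j. heis_field_deriv k (snd tx) j \<bullet> i))"
    by (intro continuous_intros continuous_on_compose2[OF continuous_on_heis_field_deriv]) auto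
  then show "continuous_on (UNIV \<times> phase_space) (\<lambda>tx :: real \<times> state. Blinfun (heis_field_deriv k (snd tx)))"
  proof (rule continuous_on_eq)
    show "blinfun_of_matrix (\<lambda>i j. heis_field_deriv k (snd tx) j \<bullet> i) = Blinfun (heis_field_deriv k (snd tx))"
      if "tx \<in> UNIV \<times> phase_space" for tx :: "real \<times> state"
      using linear that by (auto intro: Blinfun_eq_matrix[symmetric])
  qed
qed (auto simp: open_phase_space)

lemma heis_local_solution:
  assumes "p \<in> phase_space"
  obtains e x where "0 < e" "x 0 = p" "is_solution k x {-e<..<e}"
proof -
  obtain e x where "0 < e" "x 0 = p"
    and "\<forall>t\<in>{-e<..<e}. x t \<in> phase_space \<and> (x has_vector_derivative heis_field k (x t)) (at t)"
    using local_lipschitz_local_solution[OF open_phase_space local_lipschitz_heis_field[of k] assms]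
    by blast
  then show ?thesis
    using that[of e x] by (simp add: is_solution_def)
qed

lemma first_integral_derivative_heis_field:
  assumes "first_integral k F" "p \<in> phase_space" "(F has_derivative DF) (at p)"
  shows "DF (heis_field k p) = 0"
proof -
  obtain e x where "0 < e" "x 0 = p" and solution: "is_solution k x {-e<..<e}"
    using heis_local_solution[OF assms(2)] .
  have "0 \<in> {-e<..<e}"
    using \<open>0 < e\<close> by simp
  have deriv: "(F has_derivative DF) (at (x 0))"
    using assms(3) \<open>x 0 = p\<close> by simp
  have velocity: "(x has_vector_derivative heis_field k (x 0)) (at 0)"
    using solution \<open>0 \<in> {-e<..<e}\<close> unfolding is_solution_def by blast
  have level: "F (x t) = F p" if "t \<in> {-e<..<e}" for t
  proof -
    have "-e < e"
      using \<open>0 < e\<close> by simp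
    from assms(1)[unfolded first_integral_def, rule_format, OF this solution that \<open>0 \<in> {-e<..<e}\<close>]
    show ?thesis
      using \<open>x 0 = p\<close> by simp
  qed
  have "DF (heis_field k (x 0)) = 0"
    by (rule has_derivative_zero_along_level_curve[OF deriv velocity \<open>0 < e\<close> level])
  then show ?thesis
    using \<open>x 0 = p\<close> by simp
qed

section \<open>The equations for the coefficients\<close>

lemma convex_config_space: "convex config_space"
proof -
  have "config_space = {x. inner (1, 0, 0) x > (0::real)}"
    by (auto simp: config_space_def)
  then show ?thesis
    by (metis convex_halfspace_gt)
qed

lemma radially_constant:
  fixes \<phi> :: "real \<times> real \<times> real \<Rightarrow> real"
  assumes deriv: "\<And>q. q \<in> config_space \<Longrightarrow> (\<phi> has_derivative D q) (at q)"
    and radial: "\<And>r \<theta> z. 0 < r \<Longrightarrow> D (r, \<theta>, z) (1, 0, 0) = 0"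
    and "0 < r"
  shows "\<phi> (r, \<theta>, z) = \<phi> (1, \<theta>, z)"
proof -
  have "((\<lambda>s. \<phi> (s, \<theta>, z)) has_real_derivative 0) (at s within {0<..})" if "s \<in> {0<..}" for s
  proof -
    have "((\<lambda>s. \<phi> ((0, \<theta>, z) + s *\<^sub>R (1, 0, 0))) has_real_derivative D ((0, \<theta>, z) + s *\<^sub>R (1, 0, 0)) (1, 0, 0)) (at s)"
      using that by (intro has_real_derivative_along_line deriv) (simp add: config_space_def)
    then show ?thesis
      using radial that by (simp add: has_field_derivative_at_within)
  qed
  then obtain c where "\<And>s. s \<in> {0<..} \<Longrightarrow> \<phi> (s, \<theta>, z) = c"
    using has_field_derivative_zero_constant[OF convex_real_interval(3)] by blast
  then show ?thesis
    using \<open>0 < r\<close> by force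
qed

lemma angular_derivative_eq_if_radially_constant:
  fixes \<phi> :: "real \<times> real \<times> real \<Rightarrow> real"
  assumes deriv: "\<And>q. q \<in> config_space \<Longrightarrow> (\<phi> has_derivative D q) (at q)"
    and const: "\<And>r \<theta> z. 0 < r \<Longrightarrow> \<phi> (r, \<theta>, z) = \<phi> (1, \<theta>, z)"
    and "0 < r"
  shows "D (r, \<theta>, z) (0, a, b) = D (1, \<theta>, z) (0, a, b)"
proof -
  have "((\<lambda>s. \<phi> ((\<rho>, \<theta>, z) + s *\<^sub>R (0, a, b))) has_real_derivative D (\<rho>, \<theta>, z) (0, a, b)) (at 0)"
    if "0 < \<rho>" for \<rho>
    using has_real_derivative_along_line[of \<phi> "D (\<rho>, \<theta>, z)" "(\<rho>, \<theta>, z)" 0 "(0, a, b)"] deriv that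
    by (simp add: config_space_def)
  moreover have "(\<lambda>s. \<phi> ((r, \<theta>, z) + s *\<^sub>R (0, a, b))) = (\<lambda>s. \<phi> ((1, \<theta>, z) + s *\<^sub>R (0, a, b)))"
    using const[OF \<open>0 < r\<close>] by simp
  ultimately show ?thesis
    using \<open>0 < r\<close> by (metis DERIV_unique zero_less_one)
qed

text \<open>The vanishing of the coefficients of \<open>pR\<^sup>2\<close>, \<open>pR * pS\<close>, \<open>pR\<close>, \<open>pS\<close> and \<open>1\<close> in the
  derivative of \<open>linear_in_momenta f g h\<close> along the field.\<close>
locale linear_first_integral_pde =
  fixes f g h :: "real \<times> real \<times> real \<Rightarrow> real"
    and Df Dg Dh :: "real \<times> real \<times> real \<Rightarrow> real \<times> real \<times> real \<Rightarrow> real"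
  assumes f_deriv: "\<And>q. q \<in> config_space \<Longrightarrow> (f has_derivative Df q) (at q)"
    and g_deriv: "\<And>q. q \<in> config_space \<Longrightarrow> (g has_derivative Dg q) (at q)"
    and h_deriv: "\<And>q. q \<in> config_space \<Longrightarrow> (h has_derivative Dh q) (at q)"
    and balance: "\<And>r \<theta> z. 0 < r \<Longrightarrow> r * f (r, \<theta>, z) + 4 * z * g (r, \<theta>, z) = 0"
    and f_radial: "\<And>r \<theta> z. 0 < r \<Longrightarrow> Df (r, \<theta>, z) (1, 0, 0) = 0"
    and h_radial: "\<And>r \<theta> z. 0 < r \<Longrightarrow> Dh (r, \<theta>, z) (1, 0, 0) = 0"
    and fg_transport: "\<And>r \<theta> z. 0 < r \<Longrightarrow>
      Df (r, \<theta>, z) (0, 1, 0) / r\<^sup>2 + Df (r, \<theta>, z) (0, 0, 1) / 2 + Dg (r, \<theta>, z) (1, 0, 0) = 0"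
    and h_transport: "\<And>r \<theta> z. 0 < r \<Longrightarrow> Dh (r, \<theta>, z) (0, 1, 0) / r\<^sup>2 + Dh (r, \<theta>, z) (0, 0, 1) / 2 = 0"
begin

lemma f_radially_constant: "0 < r \<Longrightarrow> f (r, \<theta>, z) = f (1, \<theta>, z)"
  by (rule radially_constant[OF f_deriv f_radial])

lemma h_radially_constant: "0 < r \<Longrightarrow> h (r, \<theta>, z) = h (1, \<theta>, z)"
  by (rule radially_constant[OF h_deriv h_radial])

lemma g_radial_derivative:
  assumes "0 < r" "z \<noteq> 0"
  shows "Dg (r, \<theta>, z) (1, 0, 0) = - f (1, \<theta>, z) / (4 * z)"
proof -
  define c where "c = - f (1, \<theta>, z) / (4 * z)"
  have "((\<lambda>s. g ((0, \<theta>, z) + s *\<^sub>R (1, 0, 0))) has_real_derivative Dg (r, \<theta>, z) (1, 0, 0)) (at r)"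
    using has_real_derivative_along_line[of g "Dg (r, \<theta>, z)" "(0, \<theta>, z)" r "(1, 0, 0)"] g_deriv assms
    by (simp add: config_space_def)
  moreover have "((\<lambda>s. g ((0, \<theta>, z) + s *\<^sub>R (1, 0, 0))) has_real_derivative c) (at r)"
  proof (rule has_field_derivative_transform_within_open[where S = "{0<..}"])
    show "((*) c has_real_derivative c) (at r)"
      by simp
    show "c * s = g ((0, \<theta>, z) + s *\<^sub>R (1, 0, 0))" if "s \<in> {0<..}" for s
      using balance[of s \<theta> z] f_radially_constant[of s \<theta> z] that \<open>z \<noteq> 0\<close>
      by (simp add: c_def field_simps)
  qed (use \<open>0 < r\<close> in auto)
  ultimately show ?thesis
    unfolding c_def by (rule DERIV_unique)
qed

lemma f_ode:
  assumes "z \<noteq> 0"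
  shows "2 * z * Df (1, \<theta>, z) (0, 0, 1) = f (1, \<theta>, z)"
proof -
  have Df2: "Df (2, \<theta>, z) (0, a, b) = Df (1, \<theta>, z) (0, a, b)" for a b
    by (rule angular_derivative_eq_if_radially_constant[OF f_deriv f_radially_constant]) simp_all
  have "Df (1, \<theta>, z) (0, 1, 0) + Df (1, \<theta>, z) (0, 0, 1) / 2 - f (1, \<theta>, z) / (4 * z) = 0"
    using fg_transport[of 1 \<theta> z] g_radial_derivative[of 1 z \<theta>] assms by simp
  moreover have "Df (1, \<theta>, z) (0, 1, 0) / 4 + Df (1, \<theta>, z) (0, 0, 1) / 2 - f (1, \<theta>, z) / (4 * z) = 0"
    using fg_transport[of 2 \<theta> z] g_radial_derivative[of 2 z \<theta>] assms by (simp add: Df2)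
  ultimately show ?thesis
    using assms by (simp add: field_simps)
qed

lemma f_eq_zero: "0 < r \<Longrightarrow> f (r, \<theta>, z) = 0"
proof -
  assume "0 < r"
  have deriv: "((\<lambda>s. f (1, \<theta>, s)) has_real_derivative Df (1, \<theta>, s) (0, 0, 1)) (at s)" for s
    using has_real_derivative_along_line[of f "Df (1, \<theta>, s)" "(1, \<theta>, 0)" s "(0, 0, 1)"] f_deriv
    by (simp add: config_space_def)
  moreover have "f (1, \<theta>, 0) = 0"
    using balance[of 1 \<theta> 0] by simp
  ultimately have "f (1, \<theta>, z) = 0"
    using differentiable_solution_2z_deriv_eq_self[OF deriv f_ode] by blast
  then show ?thesis
    using f_radially_constant[OF \<open>0 < r\<close>] by simp
qed

lemma g_eq_zero:
  assumes "0 < r"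
  shows "g (r, \<theta>, z) = 0"
proof -
  have off_axis: "g (r, \<theta>, s) = 0" if "s \<noteq> 0" for s
    using balance[OF assms, of \<theta> s] f_eq_zero[OF assms] that by simp
  have "isCont (\<lambda>s. g (r, \<theta>, s)) 0"
    using has_real_derivative_along_line[of g "Dg (r, \<theta>, 0)" "(r, \<theta>, 0)" 0 "(0, 0, 1)"] g_deriv assms
    by (auto simp: config_space_def dest: DERIV_isCont)
  then have "((\<lambda>s. g (r, \<theta>, s)) \<longlongrightarrow> g (r, \<theta>, 0)) (at 0)"
    by (simp add: isCont_def)
  moreover have "((\<lambda>s. g (r, \<theta>, s)) \<longlongrightarrow> 0) (at 0)"
    by (rule tendsto_eventually) (auto simp: eventually_at_filter off_axis)
  ultimately have "g (r, \<theta>, 0) = 0"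
    using tendsto_unique[OF trivial_limit_at] by blast
  then show ?thesis
    using off_axis by (cases "z = 0") simp_all
qed

lemma h_derivative_eq_zero:
  assumes "q \<in> config_space"
  shows "Dh q = (\<lambda>_. 0)"
proof -
  obtain r \<theta> z where q: "q = (r, \<theta>, z)" and "0 < r"
    using assms by (auto simp: config_space_def)
  have Dh1: "Dh (\<rho>, \<theta>, z) (0, a, b) = Dh (1, \<theta>, z) (0, a, b)" if "0 < \<rho>" for \<rho> a b
    by (rule angular_derivative_eq_if_radially_constant[OF h_deriv h_radially_constant that])
  have "Dh (1, \<theta>, z) (0, 1, 0) + Dh (1, \<theta>, z) (0, 0, 1) / 2 = 0"
    "Dh (1, \<theta>, z) (0, 1, 0) / 4 + Dh (1, \<theta>, z) (0, 0, 1) / 2 = 0"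
    using h_transport[of 1 \<theta> z] h_transport[of 2 \<theta> z] Dh1[of 2] by simp_all
  then have "Dh q (1, 0, 0) = 0" "Dh q (0, 1, 0) = 0" "Dh q (0, 0, 1) = 0"
    using Dh1[OF \<open>0 < r\<close>] h_radial[OF \<open>0 < r\<close>] by (simp_all add: q)
  moreover have "linear (Dh q)"
    using h_deriv[OF assms] by (rule has_derivative_linear)
  ultimately have "Dh q (a, b, c) = 0" for a b c
    using linear_real3_expand[of "Dh q" a b c] by simp
  then show ?thesis
    by (simp add: fun_eq_iff)
qed

lemma h_constant: "\<exists>c. \<forall>q\<in>config_space. h q = c"
proof (rule has_derivative_zero_constant[OF convex_config_space])
  fix q assume "q \<in> config_space"
  then show "(h has_derivative (\<lambda>_. 0)) (at q within config_space)"
    using h_deriv h_derivative_eq_zero by (metis has_derivative_at_withinI)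
qed

lemma linear_in_momenta_constant: "\<exists>c. \<forall>s\<in>phase_space. linear_in_momenta f g h s = c"
proof -
  obtain c where c: "\<And>q. q \<in> config_space \<Longrightarrow> h q = c"
    using h_constant by blast
  have "linear_in_momenta f g h s = c" if "s \<in> phase_space" for s
    using that f_eq_zero g_eq_zero c
    by (auto simp: phase_space_def config_space_def linear_in_momenta_def)
  then show ?thesis
    by blast
qed

end

definition position :: "state \<Rightarrow> real \<times> real \<times> real" where
  "position s = (fst s, fst (snd s), fst (snd (snd s)))"

lemma has_derivative_position: "(position has_derivative position) (at s)"
  unfolding position_def[abs_def] by (rule derivative_eq_intros refl)+

lemma has_derivative_linear_in_momenta:
  assumes "(f has_derivative Df) (at (r, \<theta>, z))" "(g has_derivative Dg) (at (r, \<theta>, z))"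
    and "(h has_derivative Dh) (at (r, \<theta>, z))"
  shows "(linear_in_momenta f g h has_derivative
    (\<lambda>v. Df (position v) * pR + f (r, \<theta>, z) * fst (snd (snd (snd v)))
       + (Dg (position v) * pS + g (r, \<theta>, z) * snd (snd (snd (snd v)))) + Dh (position v)))
    (at (r, \<theta>, z, pR, pS))"
proof -
  have eq: "linear_in_momenta f g h = (\<lambda>s. f (position s) * fst (snd (snd (snd s)))
      + g (position s) * snd (snd (snd (snd s))) + h (position s))"
    by (auto simp: fun_eq_iff linear_in_momenta_def position_def)
  have comp: "((\<lambda>s. \<phi> (position s)) has_derivative (\<lambda>v. D\<phi> (position v))) (at (r, \<theta>, z, pR, pS))"
    if "(\<phi> has_derivative D\<phi>) (at (r, \<theta>, z))" for \<phi> D\<phi>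
    using has_derivative_compose[OF has_derivative_position, of \<phi> D\<phi>] that by (simp add: position_def)
  show ?thesis
    unfolding eq by (rule derivative_eq_intros comp[OF assms(1)] comp[OF assms(2)] comp[OF assms(3)] refl)+
      (simp add: fun_eq_iff algebra_simps position_def)
qed

lemma first_integral_linear_pde:
  assumes "0 < k" "first_integral k (linear_in_momenta f g h)"
    and f_deriv: "\<And>q. q \<in> config_space \<Longrightarrow> (f has_derivative Df q) (at q)"
    and g_deriv: "\<And>q. q \<in> config_space \<Longrightarrow> (g has_derivative Dg q) (at q)"
    and h_deriv: "\<And>q. q \<in> config_space \<Longrightarrow> (h has_derivative Dh q) (at q)"
  shows "linear_first_integral_pde f g h Df Dg Dh"
proof -
  have coeffs: "Df q (1, 0, 0) = 0
      \<and> Df q (0, 1, 0) / r\<^sup>2 + Df q (0, 0, 1) / 2 + Dg q (1, 0, 0) = 0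
      \<and> Dh q (1, 0, 0) = 0 \<and> Dh q (0, 1, 0) / r\<^sup>2 + Dh q (0, 0, 1) / 2 = 0
      \<and> r * f q + 4 * z * g q = 0"
    if "0 < r" and q: "q = (r, \<theta>, z)" for r \<theta> z q
  proof -
    define Q where "Q = gauge4 r z powr (3/2)"
    have "0 < Q"
      using gauge4_pos[OF \<open>0 < r\<close>, of z] by (simp add: Q_def)
    have "q \<in> config_space"
      using that by (simp add: config_space_def)
    note derivs = f_deriv[OF this] g_deriv[OF this] h_deriv[OF this]
    have "Df q (1, 0, 0) * x\<^sup>2 + (Df q (0, 1, 0) / r\<^sup>2 + Df q (0, 0, 1) / 2 + Dg q (1, 0, 0)) * x * y
        + (f q / r ^ 3 + Dg q (0, 1, 0) / r\<^sup>2 + Dg q (0, 0, 1) / 2) * y\<^sup>2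
        + Dh q (1, 0, 0) * x + (Dh q (0, 1, 0) / r\<^sup>2 + Dh q (0, 0, 1) / 2) * y
        + (- 2 * k * r ^ 3 / Q * f q - 8 * k * r\<^sup>2 * z / Q * g q) = 0" for x y
    proof -
      have "(r, \<theta>, z, x, y) \<in> phase_space"
        using \<open>0 < r\<close> by (simp add: phase_space_def)
      from first_integral_derivative_heis_field[OF assms(2) this
          has_derivative_linear_in_momenta[OF derivs[unfolded q]]]
      have "Df q (x, y / r\<^sup>2, y / 2) * x + f q * (y\<^sup>2 / r ^ 3 - 2 * k * r ^ 3 / Q)
          + (Dg q (x, y / r\<^sup>2, y / 2) * y + g q * (- 8 * k * r\<^sup>2 * z / Q))
          + Dh q (x, y / r\<^sup>2, y / 2) = 0"
        by (simp add: heis_field_def position_def Q_def gauge4_def q)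
      then show ?thesis
        unfolding linear_real3_expand[OF has_derivative_linear[OF derivs(1)], of x]
          linear_real3_expand[OF has_derivative_linear[OF derivs(2)], of x]
          linear_real3_expand[OF has_derivative_linear[OF derivs(3)], of x]
        by (simp add: algebra_simps power2_eq_square power3_eq_cube)
    qed
    note vanish = quadratic_form_vanishing_coeffs[OF this]
    have "- 2 * k * r\<^sup>2 / Q * (r * f q + 4 * z * g q) = 0"
      using vanish(6) by (simp add: algebra_simps power2_eq_square power3_eq_cube)
    then have "r * f q + 4 * z * g q = 0"
      using \<open>0 < k\<close> \<open>0 < r\<close> \<open>0 < Q\<close> by simp
    with vanish(1,2,4,5) show ?thesis
      by blast
  qed
  show ?thesis
    by unfold_locales (use f_deriv g_deriv h_deriv coeffs in blast)+
qed

lemma smooth_on_has_derivative: "smooth_on S f \<Longrightarrow> \<exists>D. \<forall>x\<in>S. (f has_derivative D x) (at x)"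
  unfolding smooth_on_def by blast

theorem proposition3:
  fixes k :: real
    and f g h :: "real \<times> real \<times> real \<Rightarrow> real"
  assumes "k > 0"
    and "smooth_on config_space f"
    and "smooth_on config_space g"
    and "smooth_on config_space h"
    and "first_integral k (linear_in_momenta f g h)"
  shows "\<exists>c. \<forall>s\<in>phase_space. linear_in_momenta f g h s = c"
proof -
  obtain Df Dg Dh where
    "\<And>q. q \<in> config_space \<Longrightarrow> (f has_derivative Df q) (at q)"
    "\<And>q. q \<in> config_space \<Longrightarrow> (g has_derivative Dg q) (at q)"
    "\<And>q. q \<in> config_space \<Longrightarrow> (h has_derivative Dh q) (at q)"
    using smooth_on_has_derivative[OF assms(2)] smooth_on_has_derivative[OF assms(3)]
      smooth_on_has_derivative[OF assms(4)] by metis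
  then interpret linear_first_integral_pde f g h Df Dg Dh
    by (rule first_integral_linear_pde[OF assms(1,5)])
  show ?thesis
    by (rule linear_in_momenta_constant)
qed

end
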